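(* Let $Y:=\frac12\sum_{i=1}^N\sum_{k=1}^n[X_{(i,k,1)},X_{(i,k,2)}]$, a continuous vector field on $\mathbb{R}^{nN}$. There exist $c,r>0$ such that $(Y\psi)(p)\leq -c\,\|\nabla\psi(p)\|^4$ for every $p\in\mathbb{R}^{nN}$ with $\psi(p)\leq r$.
   Context: $G=(V,E)$ is an undirected graph with $V=\{1,\ldots,N\}$ and nonempty edge set $E$ of two-element subsets (edges $ij$); $d_{ij}\geq0$ for $ij\in E$. For $p=(p_1,\ldots,p_N)\in\mathbb{R}^{nN}$: $\psi_i(p)=\frac14\sum_{j:\,ij\in E}(\|p_j-p_i\|^2-d_{ij}^2)^2$ and $\psi(p)=\frac14\sum_{ij\in E}(\|p_j-p_i\|^2-d_{ij}^2)^2$. For each $i$, $b_{i,1},\ldots,b_{i,n}$ is an orthonormal basis of $\mathbb{R}^n$; $B_{i,k}$ is the constant vector field on $\mathbb{R}^{nN}$ with $i$-th block $b_{i,k}$ and other blocks $0$. $X_{(i,k,\nu)}(p):=h_\nu(\psi_i(p))B_{i,k}(p)$; these vector fields are of class $C^1$, and $[X,Z](p)=\mathrm{D}Z(p)X(p)-\mathrm{D}X(p)Z(p)$ is the Lie bracket; $Y\psi(p)=\mathrm{D}\psi(p)Y(p)$. The functions $h_1,h_2:\mathbb{R}\to\mathbb{R}$ satisfy, for $\nu=1,2$: (i) $h_\nu(y)=0$ for $y\leq 0$; (ii) $h_\nu$ is bounded and of class $C^2$ on $(0,\infty)$; (iii) $h_\nu(y)/y$ remains bounded as $y\downarrow 0$;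 (iv) $h_\nu'(y)$ remains bounded as $y\downarrow0$; (v) $h_\nu''(y)\,y$ remains bounded as $y\downarrow 0$; (vi) there exist $r',c'>0$ with $h_2'(y)h_1(y)-h_1'(y)h_2(y)\leq -c'y$ for all $y\in(0,r']$. *)

theory Defs
  imports "HOL-Analysis.Analysis"
begin

text \<open>Configurations p in R^(nN) are represented as elements of real^'n^'v:
  'v is the (finite) vertex type, 'n the coordinate index type of R^n.
  The norm on real^'n^'v is the Euclidean norm of R^(nN).\<close>

definition edge_term :: "('v set \<Rightarrow> real) \<Rightarrow> real^'n^'v \<Rightarrow> 'v set \<Rightarrow> real" where
  "edge_term d p e =
     (let ij = (SOME ij. e = {fst ij, snd ij} \<and> fst ij \<noteq> snd ij)
      in (norm (p $ snd ij - p $ fst ij) ^ 2 - d e ^ 2) ^ 2)"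

definition psi :: "'v set set \<Rightarrow> ('v set \<Rightarrow> real) \<Rightarrow> real^'n^'v \<Rightarrow> real" where
  "psi E d p = (1/4) * (\<Sum>e\<in>E. edge_term d p e)"

definition psi_i :: "'v set set \<Rightarrow> ('v set \<Rightarrow> real) \<Rightarrow> 'v \<Rightarrow> real^'n^'v \<Rightarrow> real" where
  "psi_i E d i p = (1/4) * (\<Sum>j\<in>{j. {i, j} \<in> E}. (norm (p $ j - p $ i) ^ 2 - d {i, j} ^ 2) ^ 2)"

definition Bfield :: "('v \<Rightarrow> 'n \<Rightarrow> real^'n) \<Rightarrow> 'v \<Rightarrow> 'n \<Rightarrow> real^'n^'v" where
  "Bfield b i k = (\<chi> j. if j = i then b i k else 0)"

definition Xfield :: "'v set set \<Rightarrow> ('v set \<Rightarrow> real) \<Rightarrow> ('v \<Rightarrow> 'n \<Rightarrow> real^'n)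
    \<Rightarrow> (real \<Rightarrow> real) \<Rightarrow> 'v \<Rightarrow> 'n \<Rightarrow> real^'n^'v \<Rightarrow> real^'n^'v" where
  "Xfield E d b h i k p = h (psi_i E d i p) *\<^sub>R Bfield b i k"

definition lie_bracket :: "('a::real_normed_vector \<Rightarrow> 'a) \<Rightarrow> ('a \<Rightarrow> 'a) \<Rightarrow> 'a \<Rightarrow> 'a" where
  "lie_bracket X Z p = frechet_derivative Z (at p) (X p) - frechet_derivative X (at p) (Z p)"

definition Yfield :: "'v::finite set set \<Rightarrow> ('v set \<Rightarrow> real) \<Rightarrow> ('v \<Rightarrow> 'n::finite \<Rightarrow> real^'n)
    \<Rightarrow> (real \<Rightarrow> real) \<Rightarrow> (real \<Rightarrow> real) \<Rightarrow> real^'n^'v \<Rightarrow> real^'n^'v" where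
  "Yfield E d b h1 h2 p =
     (1/2) *\<^sub>R (\<Sum>i\<in>UNIV. \<Sum>k\<in>UNIV. lie_bracket (Xfield E d b h1 i k) (Xfield E d b h2 i k) p)"

definition lie_deriv :: "('a::real_normed_vector \<Rightarrow> 'a) \<Rightarrow> ('a \<Rightarrow> real) \<Rightarrow> 'a \<Rightarrow> real" where
  "lie_deriv Y f p = frechet_derivative f (at p) (Y p)"

definition grad :: "('a::real_inner \<Rightarrow> real) \<Rightarrow> 'a \<Rightarrow> 'a" where
  "grad f p = (SOME g. (f has_derivative (\<lambda>v. g \<bullet> v)) (at p))"

end

theory Submission
  imports Defs
begin

text \<open>Both X_{(i,k,1)} and X_{(i,k,2)} are multiples of the same constant field B_{i,k}, so their
  bracket is (h2' h1 - h1' h2)(psi_i) (D psi_i B_{i,k}) B_{i,k}; as B_{i,k} moves only vertex i,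
  D psi_i B_{i,k} = D psi B_{i,k} = (grad_i psi) . b_{i,k}. Summing over the orthonormal basis gives
  Y psi = 1/2 sum_i (h2' h1 - h1' h2)(psi_i) |grad_i psi|^2. Hypothesis (vi) bounds each coefficient
  by -c' psi_i, and near the zero set of psi one has |grad_i psi|^2 <= C psi_i, so each term is at
  most -(c'/C) |grad_i psi|^4; Cauchy-Schwarz over the N vertices turns the sum of these fourth
  powers into -(c'/(C N)) |grad psi|^4.\<close>

lemma has_derivative_power2_norm_minus:
  fixes L :: "'a::real_normed_vector \<Rightarrow> 'b::real_inner"
  assumes L: "bounded_linear L"
  shows "((\<lambda>q. (norm (L q)^2 - c)^2) has_derivative
           (\<lambda>v. 4 * (norm (L p)^2 - c) * (L p \<bullet> L v))) (at p)"
proof -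
  have "((\<lambda>q. (L q \<bullet> L q - c) * (L q \<bullet> L q - c)) has_derivative
      (\<lambda>v. (L p \<bullet> L p - c) * (L p \<bullet> L v + L v \<bullet> L p)
         + (L p \<bullet> L v + L v \<bullet> L p) * (L p \<bullet> L p - c))) (at p)"
    using bounded_linear_imp_has_derivative[OF L] by (auto intro!: derivative_eq_intros)
  then show ?thesis
    unfolding power2_norm_eq_inner by (simp add: power2_eq_square inner_commute algebra_simps)
qed

lemma linear_functional_eq_inner:
  fixes D :: "'a::euclidean_space \<Rightarrow> real"
  assumes "linear D"
  shows "\<exists>g. \<forall>v. D v = g \<bullet> v"
proof (intro exI allI)
  fix v
  have "D v = D (\<Sum>x\<in>Basis. (v \<bullet> x) *\<^sub>R x)" by (simp add: euclidean_representation)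
  also have "\<dots> = (\<Sum>x\<in>Basis. D x *\<^sub>R x) \<bullet> v"
    using assms by (simp add: linear_sum linear_scale inner_sum_right inner_commute mult.commute)
  finally show "D v = (\<Sum>x\<in>Basis. D x *\<^sub>R x) \<bullet> v" .
qed

lemma sum_power2_inner_orthonormal:
  fixes b :: "'n::finite \<Rightarrow> real^'n"
  assumes "\<forall>k l. b k \<bullet> b l = (if k = l then 1 else 0)"
  shows "(\<Sum>k\<in>UNIV. (w \<bullet> b k)^2) = norm w ^ 2"
proof -
  define M :: "real^'n^'n" where "M = (\<chi> k. b k)"
  have "orthogonal_matrix M"
    unfolding orthogonal_matrix_orthonormal_rows
    using assms by (simp add: M_def row_def norm_eq_sqrt_inner orthogonal_def)
  then have "norm w = norm (M *v w)"
    by (simp add: orthogonal_transformation_matrix orthogonal_transformation_norm)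
  also have "norm (M *v w) ^ 2 = (\<Sum>k\<in>UNIV. (w \<bullet> b k)^2)"
    by (simp add: norm_vec_def L2_set_def sum_nonneg M_def matrix_vector_mult_def
        inner_vec_def mult.commute)
  finally show ?thesis by simp
qed

lemma has_derivative_compose_vanishing:
  fixes g :: "'a::real_normed_vector \<Rightarrow> real"
  assumes g: "(g has_derivative (\<lambda>v. 0)) (at p)" "g p = 0"
    and h: "\<forall>y\<le>0. h y = 0" "\<forall>\<^sub>F y in at_right 0. \<bar>h y / y\<bar> \<le> M"
  shows "((\<lambda>q. h (g q)) has_derivative (\<lambda>v. 0)) (at p)"
proof -
  obtain \<delta> where "\<delta> > 0" and \<delta>: "\<And>y. 0 < y \<Longrightarrow> y < \<delta> \<Longrightarrow> \<bar>h y / y\<bar> \<le> M"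
    using h(2) unfolding eventually_at_right_field by auto
  have h_le: "\<bar>h y\<bar> \<le> \<bar>M\<bar> * \<bar>y\<bar>" if "y < \<delta>" for y
  proof (cases "y \<le> 0")
    case False
    then have "\<bar>h y\<bar> / \<bar>y\<bar> \<le> \<bar>M\<bar>" using \<delta>[of y] that by (simp add: abs_divide)
    then show ?thesis using False by (simp add: divide_le_eq mult.commute)
  qed (use h(1) in \<open>simp add: mult_nonneg_nonpos\<close>)
  have "\<forall>\<^sub>F q in at p. g q < \<delta>"
    using has_derivative_continuous[OF g(1)] g(2) \<open>\<delta> > 0\<close>
    by (simp add: isCont_def order_tendstoD(2))
  then have "\<forall>\<^sub>F q in at p. norm (h (g q)) / norm (q - p) \<le> \<bar>M\<bar> * (norm (g q) / norm (q - p))"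
    by eventually_elim (use h_le in \<open>auto intro: divide_right_mono\<close>)
  moreover have "((\<lambda>q. \<bar>M\<bar> * (norm (g q) / norm (q - p))) \<longlongrightarrow> 0) (at p)"
    using g tendsto_mult_right_zero unfolding has_derivative_iff_norm by fastforce
  ultimately have "((\<lambda>q. norm (h (g q)) / norm (q - p)) \<longlongrightarrow> 0) (at p)"
    by (auto intro: Lim_null_comparison elim!: eventually_mono)
  then show ?thesis
    using h(1) g(2) unfolding has_derivative_iff_norm by simp
qed

definition edge_ends :: "'v set \<Rightarrow> 'v \<times> 'v" where
  "edge_ends e = (SOME ij. e = {fst ij, snd ij} \<and> fst ij \<noteq> snd ij)"

lemma edge_eq_edge_ends:
  assumes "card e = 2"
  shows "e = {fst (edge_ends e), snd (edge_ends e)}"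
proof -
  obtain x y where "e = {x, y}" "x \<noteq> y" using assms by (auto simp: card_2_iff)
  then have "\<exists>ij. e = {fst ij, snd ij} \<and> fst ij \<noteq> snd ij" by (intro exI[of _ "(x, y)"]) simp
  from someI_ex[OF this] show ?thesis unfolding edge_ends_def by blast
qed

lemma edge_term_eq:
  "edge_term d p e = (norm (p $ snd (edge_ends e) - p $ fst (edge_ends e))^2 - d e^2)^2"
  by (simp add: edge_term_def edge_ends_def Let_def)

lemma sum_edges_at_vertex:
  fixes F :: "'v \<Rightarrow> 'v \<Rightarrow> real"
  assumes E: "\<forall>e\<in>E. card e = 2" and F: "\<And>a c. F a c = F c a"
  shows "(\<Sum>e\<in>{e\<in>E. i \<in> e}. F (fst (edge_ends e)) (snd (edge_ends e)))
    = (\<Sum>j\<in>{j. {i, j} \<in> E}. F i j)"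
proof -
  have "bij_betw (\<lambda>j. {i, j}) {j. {i, j} \<in> E} {e\<in>E. i \<in> e}"
  proof (rule bij_betwI')
    fix e assume e: "e \<in> {e\<in>E. i \<in> e}"
    then obtain j where "e = {i, j}" using E by (fastforce simp: card_2_iff)
    then show "\<exists>j\<in>{j. {i, j} \<in> E}. e = {i, j}" using e by auto
  qed (use E in \<open>fastforce simp: doubleton_eq_iff\<close>)+
  then have "(\<Sum>e\<in>{e\<in>E. i \<in> e}. F (fst (edge_ends e)) (snd (edge_ends e)))
      = (\<Sum>j\<in>{j. {i, j} \<in> E}. F (fst (edge_ends {i, j})) (snd (edge_ends {i, j})))"
    by (rule sum.reindex_bij_betw[symmetric])
  also have "\<dots> = (\<Sum>j\<in>{j. {i, j} \<in> E}. F i j)"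
  proof (rule sum.cong[OF refl])
    fix j assume "j \<in> {j. {i, j} \<in> E}"
    then have "{i, j} = {fst (edge_ends {i, j}), snd (edge_ends {i, j})}"
      using E edge_eq_edge_ends by blast
    then show "F (fst (edge_ends {i, j})) (snd (edge_ends {i, j})) = F i j"
      using F by (auto simp: doubleton_eq_iff)
  qed
  finally show ?thesis .
qed

lemma sum_edges_split:
  fixes F :: "'v \<Rightarrow> 'v \<Rightarrow> real"
  assumes "\<forall>e\<in>E. card e = 2" and "\<And>a c. F a c = F c a" and "finite E"
  shows "(\<Sum>e\<in>E. F (fst (edge_ends e)) (snd (edge_ends e))) =
     (\<Sum>j\<in>{j. {i, j} \<in> E}. F i j)
     + (\<Sum>e\<in>{e\<in>E. i \<notin> e}. F (fst (edge_ends e)) (snd (edge_ends e)))"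
proof -
  have "(\<Sum>e\<in>E. F (fst (edge_ends e)) (snd (edge_ends e))) =
     (\<Sum>e\<in>E \<inter> {e. i \<in> e}. F (fst (edge_ends e)) (snd (edge_ends e))) +
     (\<Sum>e\<in>E - {e. i \<in> e}. F (fst (edge_ends e)) (snd (edge_ends e)))"
    by (rule sum.Int_Diff[OF \<open>finite E\<close>])
  then show ?thesis
    using sum_edges_at_vertex[where F=F and i=i, OF assms(1,2)] by (simp add: Int_def set_diff_eq)
qed

definition stress :: "'v set set \<Rightarrow> ('v set \<Rightarrow> real) \<Rightarrow> real^'n^'v \<Rightarrow> 'v \<Rightarrow> real^'n" where
  "stress E d p i = (\<Sum>j\<in>{j. {i, j} \<in> E}. (norm (p$j - p$i)^2 - d {i, j}^2) *\<^sub>R (p$i - p$j))"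

definition dpsi_i :: "'v set set \<Rightarrow> ('v set \<Rightarrow> real) \<Rightarrow> 'v \<Rightarrow> real^'n^'v \<Rightarrow> real^'n^'v \<Rightarrow> real" where
  "dpsi_i E d i p v =
     (\<Sum>j\<in>{j. {i, j} \<in> E}. (norm (p$j - p$i)^2 - d {i, j}^2) * ((p$j - p$i) \<bullet> (v$j - v$i)))"

definition dpsi :: "'v set set \<Rightarrow> ('v set \<Rightarrow> real) \<Rightarrow> real^'n^'v \<Rightarrow> real^'n^'v \<Rightarrow> real" where
  "dpsi E d p v = (\<Sum>e\<in>E. (norm (p $ snd (edge_ends e) - p $ fst (edge_ends e))^2 - d e^2) *
      ((p $ snd (edge_ends e) - p $ fst (edge_ends e)) \<bullet> (v $ snd (edge_ends e) - v $ fst (edge_ends e))))"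

lemma has_derivative_psi_i: "(psi_i E d i has_derivative dpsi_i E d i p) (at p)"
proof -
  have "((\<lambda>q. 1/4 * (\<Sum>j\<in>{j. {i, j} \<in> E}. (norm (q$j - q$i)^2 - d {i, j}^2)^2)) has_derivative
      (\<lambda>v. 1/4 * (\<Sum>j\<in>{j. {i, j} \<in> E}.
         4 * (norm (p$j - p$i)^2 - d {i, j}^2) * ((p$j - p$i) \<bullet> (v$j - v$i))))) (at p)"
    by (intro has_derivative_mult_right has_derivative_sum has_derivative_power2_norm_minus
        bounded_linear_sub bounded_linear_vec_nth)
  then show ?thesis
    unfolding psi_i_def[abs_def]
    by (rule has_derivative_eq_rhs)
      (auto simp: fun_eq_iff dpsi_i_def sum_distrib_left algebra_simps intro!: sum.cong)
qed

lemma has_derivative_psi: "(psi E d has_derivative dpsi E d p) (at p)"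
proof -
  have "((\<lambda>q. 1/4 * (\<Sum>e\<in>E. (norm (q $ snd (edge_ends e) - q $ fst (edge_ends e))^2 - d e^2)^2))
      has_derivative (\<lambda>v. 1/4 * (\<Sum>e\<in>E. 4 * (norm (p $ snd (edge_ends e) - p $ fst (edge_ends e))^2 - d e^2)
         * ((p $ snd (edge_ends e) - p $ fst (edge_ends e)) \<bullet> (v $ snd (edge_ends e) - v $ fst (edge_ends e)))))) (at p)"
    by (intro has_derivative_mult_right has_derivative_sum has_derivative_power2_norm_minus
        bounded_linear_sub bounded_linear_vec_nth)
  then show ?thesis
    unfolding psi_def[abs_def] edge_term_eq
    by (rule has_derivative_eq_rhs)
      (auto simp: fun_eq_iff dpsi_def sum_distrib_left algebra_simps intro!: sum.cong)
qed

lemma psi_i_nonneg: "psi_i E d i p \<ge> 0"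
  by (simp add: psi_i_def sum_nonneg)

lemma psi_i_le_psi:
  fixes E :: "'v::finite set set"
  assumes E: "\<forall>e\<in>E. card e = 2"
  shows "psi_i E d i p \<le> psi E d p"
proof -
  define F where "F a c = (norm (p$c - p$a)^2 - d {a, c}^2)^2" for a c
  have F_sym: "F a c = F c a" for a c by (simp add: F_def norm_minus_commute insert_commute)
  have "psi E d p = 1/4 * (\<Sum>e\<in>E. F (fst (edge_ends e)) (snd (edge_ends e)))"
    unfolding psi_def edge_term_eq F_def using E edge_eq_edge_ends by (metis (no_types, lifting) sum.cong)
  also have "\<dots> = psi_i E d i p
      + 1/4 * (\<Sum>e\<in>{e\<in>E. i \<notin> e}. F (fst (edge_ends e)) (snd (edge_ends e)))"
    unfolding sum_edges_split[where F=F and i=i, OF E F_sym finite] by (simp add: psi_i_def F_def)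
  finally show ?thesis by (simp add: F_def sum_nonneg)
qed

lemma inner_vec_supported:
  fixes G v :: "'a::real_inner^'v::finite"
  assumes "\<forall>j. j \<noteq> i \<longrightarrow> v $ j = 0"
  shows "G \<bullet> v = G $ i \<bullet> v $ i"
  using assms by (simp add: inner_vec_def sum.remove[of UNIV i])

lemma dpsi_i_supported:
  assumes E: "\<forall>e\<in>E. card e = 2" and v: "\<forall>j. j \<noteq> i \<longrightarrow> v $ j = 0"
  shows "dpsi_i E d i p v = stress E d p i \<bullet> v $ i"
  unfolding dpsi_i_def stress_def inner_sum_left
proof (rule sum.cong[OF refl])
  fix j assume "j \<in> {j. {i, j} \<in> E}"
  then have "j \<noteq> i" using E by fastforce
  then show "(norm (p$j - p$i)^2 - d {i, j}^2) * ((p$j - p$i) \<bullet> (v$j - v$i)) =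
     ((norm (p$j - p$i)^2 - d {i, j}^2) *\<^sub>R (p$i - p$j)) \<bullet> v$i"
    using v by (simp add: inner_diff_left inner_diff_right)
qed

lemma dpsi_supported:
  fixes E :: "'v::finite set set"
  assumes E: "\<forall>e\<in>E. card e = 2" and v: "\<forall>j. j \<noteq> i \<longrightarrow> v $ j = 0"
  shows "dpsi E d p v = dpsi_i E d i p v"
proof -
  define T where "T a c = (norm (p$c - p$a)^2 - d {a, c}^2) * ((p$c - p$a) \<bullet> (v$c - v$a))" for a c
  have T_sym: "T a c = T c a" for a c
    by (simp add: T_def norm_minus_commute insert_commute inner_diff_left inner_diff_right algebra_simps)
  have "dpsi E d p v = (\<Sum>e\<in>E. T (fst (edge_ends e)) (snd (edge_ends e)))"
    unfolding dpsi_def T_def using E edge_eq_edge_ends by (metis (no_types, lifting) sum.cong)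
  also have "\<dots> = (\<Sum>j\<in>{j. {i, j} \<in> E}. T i j)"
  proof -
    have "T (fst (edge_ends e)) (snd (edge_ends e)) = 0" if "e \<in> E" "i \<notin> e" for e
    proof -
      have "fst (edge_ends e) \<noteq> i" "snd (edge_ends e) \<noteq> i"
        using that E edge_eq_edge_ends[of e] by (metis insertCI)+
      then show ?thesis using v by (simp add: T_def)
    qed
    then show ?thesis by (simp add: sum_edges_split[where F=T and i=i, OF E T_sym finite])
  qed
  finally show ?thesis by (simp add: T_def dpsi_i_def)
qed

lemma has_derivative_psi_grad: "(psi E d has_derivative (\<lambda>v. grad (psi E d) p \<bullet> v)) (at p)"
proof -
  have "linear (dpsi E d p)"
    using has_derivative_psi has_derivative_linear by blast
  then obtain g where "\<forall>v. dpsi E d p v = g \<bullet> v"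
    using linear_functional_eq_inner by blast
  then have "dpsi E d p = (\<lambda>v. g \<bullet> v)" by auto
  then have "(psi E d has_derivative (\<lambda>v. g \<bullet> v)) (at p)"
    using has_derivative_psi[of E d p] by simp
  then have "\<exists>g. (psi E d has_derivative (\<lambda>v. g \<bullet> v)) (at p)" ..
  then show ?thesis unfolding grad_def by (rule someI_ex)
qed

lemma dpsi_eq_inner_grad: "dpsi E d p v = grad (psi E d) p \<bullet> v"
  using has_derivative_unique[OF has_derivative_psi has_derivative_psi_grad] by metis

lemma grad_psi_nth:
  fixes E :: "'v::finite set set" and p :: "real^'n^'v"
  assumes E: "\<forall>e\<in>E. card e = 2"
  shows "grad (psi E d) p $ i = stress E d p i"
proof -
  have "grad (psi E d) p $ i \<bullet> u = stress E d p i \<bullet> u" for u :: "real^'n"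
  proof -
    define v :: "real^'n^'v" where "v = (\<chi> j. if j = i then u else 0)"
    have v: "\<forall>j. j \<noteq> i \<longrightarrow> v $ j = 0" by (simp add: v_def)
    have "grad (psi E d) p \<bullet> v = dpsi_i E d i p v"
      by (simp add: dpsi_eq_inner_grad[symmetric] dpsi_supported[OF E v])
    then show ?thesis
      by (simp add: inner_vec_supported[OF v] dpsi_i_supported[OF E v]) (simp add: v_def)
  qed
  then show ?thesis using vector_eq_rdot by blast
qed

lemma dpsi_i_eq_0:
  assumes "psi_i E d i p = 0"
  shows "dpsi_i E d i p = (\<lambda>v. 0)"
proof -
  have "(\<Sum>j\<in>{j. {i, j} \<in> E}. (norm (p$j - p$i)^2 - d {i, j}^2)^2) = 0"
    using assms by (simp add: psi_i_def)
  then have "\<forall>j\<in>{j. {i, j} \<in> E}. (norm (p$j - p$i)^2 - d {i, j}^2)^2 = 0"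
    by (subst (asm) sum_nonneg_eq_0_iff) auto
  then show ?thesis by (auto simp: dpsi_i_def fun_eq_iff intro!: sum.neutral)
qed

lemma has_derivative_comp_psi_i:
  assumes h0: "\<forall>y\<le>0. h y = 0" and h_lin: "\<exists>M. \<forall>\<^sub>F y in at_right 0. \<bar>h y / y\<bar> \<le> M"
    and h': "\<forall>y>0. (h has_real_derivative h' y) (at y)"
  shows "((\<lambda>q. h (psi_i E d i q)) has_derivative (\<lambda>v. h' (psi_i E d i p) * dpsi_i E d i p v)) (at p)"
proof (cases "psi_i E d i p > 0")
  case True
  then show ?thesis
    using has_derivative_compose[OF has_derivative_psi_i
        h'[rule_format, OF True, unfolded has_field_derivative_def]]
    by simp
next
  case False
  \<comment> \<open>h need not be differentiable at 0: here h(y) = O(y) replaces the chain rule.\<close>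
  then have psi_i_0: "psi_i E d i p = 0" using psi_i_nonneg[of E d i p] by simp
  have flat: "(psi_i E d i has_derivative (\<lambda>v. 0)) (at p)"
    using has_derivative_psi_i[of E d i p] psi_i_0 by (simp add: dpsi_i_eq_0)
  obtain M where M: "\<forall>\<^sub>F y in at_right 0. \<bar>h y / y\<bar> \<le> M" using h_lin ..
  show ?thesis
    using has_derivative_compose_vanishing[OF flat psi_i_0 h0 M] by (simp add: dpsi_i_eq_0[OF psi_i_0])
qed

lemma has_derivative_Xfield:
  assumes "\<forall>y\<le>0. h y = 0" and "\<exists>M. \<forall>\<^sub>F y in at_right 0. \<bar>h y / y\<bar> \<le> M"
    and "\<forall>y>0. (h has_real_derivative h' y) (at y)"
  shows "(Xfield E d b h i k has_derivative
     (\<lambda>v. (h' (psi_i E d i p) * dpsi_i E d i p v) *\<^sub>R Bfield b i k)) (at p)"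
  unfolding Xfield_def[abs_def]
  by (rule has_derivative_scaleR_left[OF has_derivative_comp_psi_i[OF assms]])

lemma lie_bracket_Xfield:
  assumes "\<forall>y\<le>0. h1 y = 0" "\<exists>M. \<forall>\<^sub>F y in at_right 0. \<bar>h1 y / y\<bar> \<le> M"
    "\<forall>y>0. (h1 has_real_derivative h1' y) (at y)"
    and "\<forall>y\<le>0. h2 y = 0" "\<exists>M. \<forall>\<^sub>F y in at_right 0. \<bar>h2 y / y\<bar> \<le> M"
    "\<forall>y>0. (h2 has_real_derivative h2' y) (at y)"
  shows "lie_bracket (Xfield E d b h1 i k) (Xfield E d b h2 i k) p =
    ((h2' (psi_i E d i p) * h1 (psi_i E d i p) - h1' (psi_i E d i p) * h2 (psi_i E d i p))
       * dpsi_i E d i p (Bfield b i k)) *\<^sub>R Bfield b i k"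
proof -
  have lin: "linear (dpsi_i E d i p)"
    using has_derivative_psi_i has_derivative_linear by blast
  show ?thesis
    unfolding lie_bracket_def
      frechet_derivative_at[OF has_derivative_Xfield[OF assms(1-3)], symmetric]
      frechet_derivative_at[OF has_derivative_Xfield[OF assms(4-6)], symmetric]
    by (simp add: Xfield_def linear_scale[OF lin] algebra_simps flip: scaleR_left_diff_distrib)
qed

lemma lie_deriv_Yfield_psi:
  fixes E :: "'v::finite set set" and b :: "'v \<Rightarrow> 'n::finite \<Rightarrow> real^'n"
  assumes E: "\<forall>e\<in>E. card e = 2"
    and b: "\<forall>i k l. b i k \<bullet> b i l = (if k = l then 1 else 0)"
    and h1: "\<forall>y\<le>0. h1 y = 0" "\<exists>M. \<forall>\<^sub>F y in at_right 0. \<bar>h1 y / y\<bar> \<le> M"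
      "\<forall>y>0. (h1 has_real_derivative h1' y) (at y)"
    and h2: "\<forall>y\<le>0. h2 y = 0" "\<exists>M. \<forall>\<^sub>F y in at_right 0. \<bar>h2 y / y\<bar> \<le> M"
      "\<forall>y>0. (h2 has_real_derivative h2' y) (at y)"
  shows "lie_deriv (Yfield E d b h1 h2) (psi E d) p =
    1/2 * (\<Sum>i\<in>UNIV. (h2' (psi_i E d i p) * h1 (psi_i E d i p) - h1' (psi_i E d i p) * h2 (psi_i E d i p))
       * norm (grad (psi E d) p $ i) ^ 2)"
proof -
  define G where "G = grad (psi E d) p"
  define g where
    "g i = h2' (psi_i E d i p) * h1 (psi_i E d i p) - h1' (psi_i E d i p) * h2 (psi_i E d i p)" for i
  have B: "\<forall>j. j \<noteq> i \<longrightarrow> Bfield b i k $ j = 0" for i k by (simp add: Bfield_def)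
  have dpsi_i_B: "dpsi_i E d i p (Bfield b i k) = G $ i \<bullet> b i k" for i k
    using dpsi_i_supported[OF E B] by (simp add: grad_psi_nth[OF E] G_def Bfield_def)
  have "lie_deriv (Yfield E d b h1 h2) (psi E d) p = G \<bullet> Yfield E d b h1 h2 p"
    unfolding lie_deriv_def frechet_derivative_at[OF has_derivative_psi_grad, symmetric] G_def ..
  also have "Yfield E d b h1 h2 p =
      (1/2) *\<^sub>R (\<Sum>i\<in>UNIV. \<Sum>k\<in>UNIV. (g i * (G $ i \<bullet> b i k)) *\<^sub>R Bfield b i k)"
    unfolding Yfield_def lie_bracket_Xfield[OF h1 h2] g_def dpsi_i_B ..
  also have "G \<bullet> \<dots> = 1/2 * (\<Sum>i\<in>UNIV. g i * (\<Sum>k\<in>UNIV. (G $ i \<bullet> b i k)^2))"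
    by (simp add: inner_sum_right inner_vec_supported[OF B] sum_distrib_left power2_eq_square mult.assoc)
      (simp add: Bfield_def)
  also have "\<dots> = 1/2 * (\<Sum>i\<in>UNIV. g i * norm (G $ i) ^ 2)"
    using sum_power2_inner_orthonormal[of "b i" for i] b by simp
  finally show ?thesis by (simp add: G_def g_def)
qed

lemma power2_defect_le_psi_i:
  assumes "{i, j} \<in> E"
  shows "(norm (p$j - p$i)^2 - d {i, j}^2)^2 \<le> 4 * psi_i E d i p"
  using assms member_le_sum[of j "{j. {i, j} \<in> E}" "\<lambda>j. (norm (p$j - p$i)^2 - d {i, j}^2)^2"]
  by (simp add: psi_i_def)

lemma power2_norm_sum_le:
  fixes x :: "'a \<Rightarrow> 'b::real_normed_vector"
  shows "norm (\<Sum>j\<in>S. x j)^2 \<le> card S * (\<Sum>j\<in>S. norm (x j)^2)"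
proof -
  have "norm (\<Sum>j\<in>S. x j)^2 \<le> (\<Sum>j\<in>S. norm (x j))^2"
    by (simp add: norm_sum power_mono)
  also have "\<dots> \<le> (\<Sum>j\<in>S. norm (x j)^2) * card S"
    by (rule sum_squared_le_sum_of_squares)
  finally show ?thesis by (simp add: mult.commute)
qed

lemma norm_grad_psi_nth_le:
  fixes E :: "'v::finite set set" and p :: "real^'n^'v"
  assumes E: "\<forall>e\<in>E. card e = 2" and psi_le_1: "psi E d p \<le> 1"
  shows "norm (grad (psi E d) p $ i)^2 \<le> 4 * (2 + (\<Sum>e\<in>E. d e^2)) * CARD('v) * psi_i E d i p"
proof -
  define S where "S = {j. {i, j} \<in> E}"
  define f where "f j = norm (p$j - p$i)^2 - d {i, j}^2" for j
  define D where "D = (\<Sum>e\<in>E. d e^2)"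
  have f_le: "\<bar>f j\<bar> \<le> 2" if "j \<in> S" for j
  proof (rule power2_le_imp_le)
    show "\<bar>f j\<bar>^2 \<le> 2^2"
      using power2_defect_le_psi_i[of i j E p d] that psi_i_le_psi[OF E, of d i p] psi_le_1
      by (simp add: S_def f_def)
  qed simp
  have dist_le: "norm (p$i - p$j)^2 \<le> 2 + D" if "j \<in> S" for j
  proof -
    have "d {i, j}^2 \<le> D"
      using that member_le_sum[of "{i, j}" E "\<lambda>e. d e^2"] by (simp add: S_def D_def)
    then show ?thesis using f_le[OF that] by (simp add: f_def norm_minus_commute)
  qed
  have "grad (psi E d) p $ i = (\<Sum>j\<in>S. f j *\<^sub>R (p$i - p$j))"
    by (simp add: grad_psi_nth[OF E] stress_def S_def f_def)
  then have "norm (grad (psi E d) p $ i)^2 \<le> card S * (\<Sum>j\<in>S. norm (f j *\<^sub>R (p$i - p$j))^2)"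
    by (simp only: power2_norm_sum_le)
  also have "\<dots> \<le> CARD('v) * (\<Sum>j\<in>S. f j^2 * (2 + D))"
  proof (rule mult_mono)
    show "(\<Sum>j\<in>S. norm (f j *\<^sub>R (p$i - p$j))^2) \<le> (\<Sum>j\<in>S. f j^2 * (2 + D))"
      using dist_le by (intro sum_mono) (simp add: power_mult_distrib mult_left_mono)
  qed (auto intro: card_mono sum_nonneg)
  also have "\<dots> = 4 * (2 + D) * CARD('v) * psi_i E d i p"
    by (simp add: psi_i_def S_def f_def flip: sum_distrib_right)
  finally show ?thesis by (simp add: D_def)
qed

lemma mult_le_neg_power2:
  fixes g x y C c :: real
  assumes x: "0 \<le> x" "x \<le> C * y" and "C > 0" "c \<ge> 0" and g: "y > 0 \<Longrightarrow> g \<le> - c * y"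
  shows "g * x \<le> - (c / C) * x^2"
proof (cases "y > 0")
  case True
  have "x / C \<le> y" using assms by (simp add: pos_divide_le_eq mult.commute)
  then have "c * x * (x / C) \<le> c * x * y" using assms by (intro mult_left_mono) auto
  moreover have "g * x \<le> - c * y * x" using g[OF True] x(1) by (rule mult_right_mono)
  ultimately show ?thesis by (simp add: power2_eq_square algebra_simps)
next
  case False
  then have "x = 0" using x \<open>C > 0\<close> mult_nonneg_nonpos[of C y] by linarith
  then show ?thesis by simp
qed

lemma sum_neg_power2_le:
  fixes x :: "'i::finite \<Rightarrow> real"
  assumes "\<kappa> \<ge> 0"
  shows "(\<Sum>i\<in>UNIV. - \<kappa> * x i^2) \<le> - (\<kappa> / CARD('i)) * (\<Sum>i\<in>UNIV. x i)^2"
proof -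
  have "(\<Sum>i\<in>UNIV. x i)^2 / CARD('i) \<le> (\<Sum>i\<in>UNIV. x i^2)"
    using sum_squared_le_sum_of_squares[of x UNIV] by (simp add: divide_le_eq)
  then have "\<kappa> * ((\<Sum>i\<in>UNIV. x i)^2 / CARD('i)) \<le> \<kappa> * (\<Sum>i\<in>UNIV. x i^2)"
    using assms by (rule mult_left_mono)
  then show ?thesis by (simp add: sum_distrib_left sum_negf)
qed

lemma power4_norm_vec:
  fixes x :: "'a::real_normed_vector^'i::finite"
  shows "norm x ^ 4 = (\<Sum>i\<in>UNIV. norm (x $ i)^2)^2"
proof -
  have "norm x ^ 4 = (norm x ^ 2)^2" by (simp flip: power_mult)
  then show ?thesis by (simp add: norm_vec_def L2_set_def sum_nonneg)
qed

lemma lie_deriv_Yfield_psi_le: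
  fixes E :: "'v::finite set set" and b :: "'v \<Rightarrow> 'n::finite \<Rightarrow> real^'n" and p :: "real^'n^'v"
  assumes E: "\<forall>e\<in>E. card e = 2"
    and b: "\<forall>i k l. b i k \<bullet> b i l = (if k = l then 1 else 0)"
    and h1: "\<forall>y\<le>0. h1 y = 0" "\<exists>M. \<forall>\<^sub>F y in at_right 0. \<bar>h1 y / y\<bar> \<le> M"
      "\<forall>y>0. (h1 has_real_derivative h1' y) (at y)"
    and h2: "\<forall>y\<le>0. h2 y = 0" "\<exists>M. \<forall>\<^sub>F y in at_right 0. \<bar>h2 y / y\<bar> \<le> M"
      "\<forall>y>0. (h2 has_real_derivative h2' y) (at y)"
    and h_neg: "\<forall>y. 0 < y \<and> y \<le> r \<longrightarrow> h2' y * h1 y - h1' y * h2 y \<le> - c * y" and "c \<ge> 0"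
    and psi_small: "psi E d p \<le> min r 1"
  shows "lie_deriv (Yfield E d b h1 h2) (psi E d) p
     \<le> - (c / (8 * (2 + (\<Sum>e\<in>E. d e^2)) * CARD('v)^2)) * norm (grad (psi E d) p) ^ 4"
proof -
  define C where "C = 4 * (2 + (\<Sum>e\<in>E. d e^2)) * CARD('v)"
  have "C > 0" by (simp add: C_def sum_nonneg add_pos_nonneg)
  define n where "n i = norm (grad (psi E d) p $ i)^2" for i
  have vertex_bound:
    "(h2' (psi_i E d i p) * h1 (psi_i E d i p) - h1' (psi_i E d i p) * h2 (psi_i E d i p)) * n i
       \<le> - (c / C) * n i^2" for i
    using psi_i_le_psi[OF E, of d i p] psi_small h_neg \<open>C > 0\<close> \<open>c \<ge> 0\<close>
      norm_grad_psi_nth_le[OF E, of d p i]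
    by (intro mult_le_neg_power2[where y = "psi_i E d i p"]) (auto simp: n_def C_def)
  have "lie_deriv (Yfield E d b h1 h2) (psi E d) p \<le> 1/2 * (\<Sum>i\<in>UNIV. - (c / C) * n i^2)"
    unfolding lie_deriv_Yfield_psi[OF E b h1 h2] using vertex_bound by (simp add: n_def sum_mono)
  also have "\<dots> \<le> 1/2 * (- (c / C / CARD('v)) * (\<Sum>i\<in>UNIV. n i)^2)"
    using \<open>C > 0\<close> \<open>c \<ge> 0\<close> by (intro mult_left_mono sum_neg_power2_le) simp_all
  also have "\<dots> = - (c / (8 * (2 + (\<Sum>e\<in>E. d e^2)) * CARD('v)^2)) * norm (grad (psi E d) p) ^ 4"
    by (simp add: power4_norm_vec n_def C_def power2_eq_square)
  finally show ?thesis .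
qed

theorem lemma5p3:
  fixes E :: "'v::finite set set"
    and d :: "'v set \<Rightarrow> real"
    and b :: "'v \<Rightarrow> 'n::finite \<Rightarrow> real^'n"
    and h1 h2 h1' h2' h1'' h2'' :: "real \<Rightarrow> real"
  assumes E_nonempty: "E \<noteq> {}"
    and E_edges: "\<forall>e\<in>E. card e = 2"
    and d_nonneg: "\<forall>e\<in>E. d e \<ge> 0"
    and b_orthonormal: "\<forall>i k l. b i k \<bullet> b i l = (if k = l then 1 else 0)"
    and h1_zero: "\<forall>y\<le>0. h1 y = 0"
    and h2_zero: "\<forall>y\<le>0. h2 y = 0"
    and h1_bounded: "\<exists>M. \<forall>y>0. \<bar>h1 y\<bar> \<le> M"
    and h2_bounded: "\<exists>M. \<forall>y>0. \<bar>h2 y\<bar> \<le> M"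
    and h1_deriv: "\<forall>y>0. (h1 has_real_derivative h1' y) (at y)"
    and h2_deriv: "\<forall>y>0. (h2 has_real_derivative h2' y) (at y)"
    and h1_deriv2: "\<forall>y>0. (h1' has_real_derivative h1'' y) (at y)"
    and h2_deriv2: "\<forall>y>0. (h2' has_real_derivative h2'' y) (at y)"
    and h1_C2: "continuous_on {0<..} h1''"
    and h2_C2: "continuous_on {0<..} h2''"
    and h1_iii: "\<exists>M. \<forall>\<^sub>F y in at_right 0. \<bar>h1 y / y\<bar> \<le> M"
    and h2_iii: "\<exists>M. \<forall>\<^sub>F y in at_right 0. \<bar>h2 y / y\<bar> \<le> M"
    and h1_iv: "\<exists>M. \<forall>\<^sub>F y in at_right 0. \<bar>h1' y\<bar> \<le> M"
    and h2_iv: "\<exists>M. \<forall>\<^sub>F y in at_right 0. \<bar>h2' y\<bar> \<le> M"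
    and h1_v: "\<exists>M. \<forall>\<^sub>F y in at_right 0. \<bar>h1'' y * y\<bar> \<le> M"
    and h2_v: "\<exists>M. \<forall>\<^sub>F y in at_right 0. \<bar>h2'' y * y\<bar> \<le> M"
    and h_vi: "\<exists>r' c'. r' > 0 \<and> c' > 0 \<and>
                 (\<forall>y. 0 < y \<and> y \<le> r' \<longrightarrow> h2' y * h1 y - h1' y * h2 y \<le> - c' * y)"
  shows "\<exists>c r. c > 0 \<and> r > 0 \<and>
           (\<forall>p::real^'n^'v. psi E d p \<le> r \<longrightarrow>
              lie_deriv (Yfield E d b h1 h2) (psi E d) p
                \<le> - c * norm (grad (psi E d) p) ^ 4)"
proof -
  obtain r c where "r > 0" "c > 0"
    and h_neg: "\<forall>y. 0 < y \<and> y \<le> r \<longrightarrow> h2' y * h1 y - h1' y * h2 y \<le> - c * y"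
    using h_vi by blast
  have "c / (8 * (2 + (\<Sum>e\<in>E. d e^2)) * CARD('v)^2) > 0"
    using \<open>c > 0\<close> by (simp add: sum_nonneg add_pos_nonneg)
  with \<open>r > 0\<close> show ?thesis
    using lie_deriv_Yfield_psi_le[OF E_edges b_orthonormal h1_zero h1_iii h1_deriv
        h2_zero h2_iii h2_deriv h_neg] \<open>c > 0\<close>
    by (intro exI[of _ "c / (8 * (2 + (\<Sum>e\<in>E. d e^2)) * CARD('v)^2)"] exI[of _ "min r 1"]) auto
qed

end
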